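(* Let $n\ge 1$ and let $\sigma$ be any permutation of $\{1,\dots,n\}$. Let $P_\sigma$ be the unitary on $n$ qubits that permutes the qubits according to $\sigma$, i.e. $P_\sigma|b_1 b_2\cdots b_n\rangle = |b_{\sigma^{-1}(1)} b_{\sigma^{-1}(2)}\cdots b_{\sigma^{-1}(n)}\rangle$ for all $b_i\in\{0,1\}$. Then: (i) $P_\sigma$ can be embedded, using $n$ ancillae, in a circuit consisting of 4 layers each of which contains only controlled-not gates (acting on disjoint pairs of qubits); (ii) $P_\sigma$ is equal (with no ancillae) to a circuit consisting of 6 layers each of which contains only controlled-not gates (acting on disjoint pairs of qubits).
   Context: Qubits have computational basis $|0\rangle,|1\rangle$; an operator on $n$ qubits is a $2^n\times 2^n$ unitary matrix indexed by bit strings. The controlled-not gate is the two-qubit unitary $\mathrm{diag}$-block matrix $\begin{pmatrix}1&0&0&0\\0&1&0&0\\0&0&0&1\\0&0&1&0\end{pmatrix}$ (first qubit = control, second = target), i.e. $|a,b\rangle\mapsto|a,a\oplus b\rangle$. A layer is a tensor product of gates acting on pairwise disjoint sets of qubits (qubits not acted on are left unchanged); a circuit of $k$ layers is the product of $k$ layers. An operator $F$ on $n$ qubits is embedded in an operator $M$ on $n+m$ qubits using $m$ ancillae if $M$ maps the subspace where all $m$ ancilla qubits are $|0\rangle$ into itself and, restricted to that subspace, equals $F\otimes \mathbf{1}$ (i.e. $M(|\psi\rangle\otimes|0\cdots0\rangle)=(F|\psi\rangle)\otimes|0\cdots 0\rangle$ for all $|\psi\rangle$). *)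

theory Defs
  imports Complex_Main "HOL-Combinatorics.Permutations"
begin

text \<open>Qubits are indexed 0,1,...,N-1. A computational basis state of N qubits is a bit
  assignment b :: nat => bool vanishing (False) outside {0..<N}. An operator on N qubits is a
  matrix indexed by basis states: entry M x y is the coefficient of basis state x in M applied
  to basis state y.\<close>

type_synonym bits = "nat \<Rightarrow> bool"
type_synonym qop = "bits \<Rightarrow> bits \<Rightarrow> complex"

definition basis :: "nat \<Rightarrow> bits set" where
  "basis N = {b. \<forall>i\<ge>N. \<not> b i}"

definition op_mult :: "nat \<Rightarrow> qop \<Rightarrow> qop \<Rightarrow> qop" where
  "op_mult N A B = (\<lambda>x z. \<Sum>y\<in>basis N. A x y * B y z)"

definition op_id :: qop where
  "op_id = (\<lambda>x y. if x = y then 1 else 0)"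

definition op_apply :: "nat \<Rightarrow> qop \<Rightarrow> (bits \<Rightarrow> complex) \<Rightarrow> (bits \<Rightarrow> complex)" where
  "op_apply N M \<psi> = (\<lambda>x. \<Sum>y\<in>basis N. M x y * \<psi> y)"

definition cnot :: "nat \<Rightarrow> nat \<Rightarrow> qop" where
  "cnot c t = (\<lambda>x y. if x = y(t := (y t \<noteq> y c)) then 1 else 0)"

text \<open>Its operator is the tensor product of the gates,
  i.e. the product of the (commuting) gates.\<close>
definition cnot_layer :: "nat \<Rightarrow> (nat \<times> nat) list \<Rightarrow> bool" where
  "cnot_layer N L \<longleftrightarrow> (\<forall>(c, t)\<in>set L. c < N \<and> t < N)
      \<and> distinct (concat (map (\<lambda>(c, t). [c, t]) L))"

definition layer_op :: "nat \<Rightarrow> (nat \<times> nat) list \<Rightarrow> qop" where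
  "layer_op N L = foldr (\<lambda>(c, t) M. op_mult N (cnot c t) M) L op_id"

definition circuit_op :: "nat \<Rightarrow> (nat \<times> nat) list list \<Rightarrow> qop" where
  "circuit_op N Ls = foldr (\<lambda>L M. op_mult N (layer_op N L) M) Ls op_id"

definition perm_op :: "nat \<Rightarrow> (nat \<Rightarrow> nat) \<Rightarrow> qop" where
  "perm_op n \<sigma> = (\<lambda>x y. if x = (\<lambda>i. y (inv \<sigma> i)) then 1 else 0)"

text \<open>State psi on n qubits tensored with m ancillae (qubits n..n+m-1) in state |0...0>.\<close>
definition with_zero_ancillae :: "nat \<Rightarrow> (bits \<Rightarrow> complex) \<Rightarrow> (bits \<Rightarrow> complex)" where
  "with_zero_ancillae n \<psi> = (\<lambda>x. if \<forall>i\<ge>n. \<not> x i then \<psi> x else 0)"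

definition embeds :: "nat \<Rightarrow> nat \<Rightarrow> qop \<Rightarrow> qop \<Rightarrow> bool" where
  "embeds n m M F \<longleftrightarrow> (\<forall>\<psi>. \<forall>x\<in>basis (n + m).
      op_apply (n + m) M (with_zero_ancillae n \<psi>) x
      = with_zero_ancillae n (op_apply n F \<psi>) x)"

end

theory Submission
  imports Defs "HOL-Combinatorics.Orbits"
begin

text \<open>A CNOT circuit maps computational basis states to basis states, so its operator is the
  permutation matrix of a map on bit strings, obtained by composing the classical actions of
  its gates; both parts of the theorem thus reduce to computing such maps.
  (i) With n ancillae: copy every bit i to ancilla \<sigma> i, use these copies to erase the bits,
  copy the ancillae back into the data qubits and finally erase the ancillae with them.
  (ii) Without ancillae: every permutation is a product of two involutions (on each cycle it is
  the product of two reflections), and an involution of the qubits is a set of disjoint swaps,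
  each of which is three CNOTs; the swaps of one involution are done in parallel in three layers.\<close>

definition map_op :: "(bits \<Rightarrow> bits) \<Rightarrow> qop" where
  "map_op g = (\<lambda>x y. if x = g y then 1 else 0)"

definition realizes :: "nat \<Rightarrow> qop \<Rightarrow> (bits \<Rightarrow> bits) \<Rightarrow> bool" where
  "realizes N M g \<longleftrightarrow>
     (\<forall>y\<in>basis N. g y \<in> basis N \<and> (\<forall>x\<in>basis N. M x y = map_op g x y))"

definition cnot_map :: "nat \<Rightarrow> nat \<Rightarrow> bits \<Rightarrow> bits" where
  "cnot_map c t y = y(t := (y t \<noteq> y c))"

definition layer_map :: "(nat \<times> nat) list \<Rightarrow> bits \<Rightarrow> bits" where
  "layer_map L = foldr (\<lambda>(c, t) f. cnot_map c t \<circ> f) L id"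

definition circuit_map :: "(nat \<times> nat) list list \<Rightarrow> bits \<Rightarrow> bits" where
  "circuit_map Ls = foldr (\<lambda>L f. layer_map L \<circ> f) Ls id"

lemma finite_basis: "finite (basis N)"
proof (rule finite_subset)
  show "basis N \<subseteq> (\<lambda>S i. i \<in> S) ` Pow {..<N}"
  proof
    fix b assume "b \<in> basis N"
    then have "b = (\<lambda>i. i \<in> {i. i < N \<and> b i})"
      by (auto simp: basis_def fun_eq_iff not_le[symmetric])
    then show "b \<in> (\<lambda>S i. i \<in> S) ` Pow {..<N}" by blast
  qed
qed simp

lemma cnot_eq_map_op: "cnot c t = map_op (cnot_map c t)"
  by (simp add: cnot_def map_op_def cnot_map_def)

lemma perm_op_eq_map_op: "perm_op n \<sigma> = map_op (\<lambda>y i. y (inv \<sigma> i))"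
  by (simp add: perm_op_def map_op_def)

lemma realizes_op_id: "realizes N op_id (\<lambda>y. y)"
  by (auto simp: realizes_def op_id_def map_op_def)

lemma realizes_map_op: "(\<And>y. y \<in> basis N \<Longrightarrow> g y \<in> basis N) \<Longrightarrow> realizes N (map_op g) g"
  by (simp add: realizes_def)

lemma realizes_op_mult:
  assumes "realizes N A g" and "realizes N B h"
  shows "realizes N (op_mult N A B) (g \<circ> h)"
  unfolding realizes_def
proof (intro ballI conjI)
  fix y assume y: "y \<in> basis N"
  then have hy: "h y \<in> basis N" using assms(2) by (simp add: realizes_def)
  then show "(g \<circ> h) y \<in> basis N" using assms(1) by (simp add: realizes_def)
  fix x assume x: "x \<in> basis N"
  have "op_mult N A B x y = (\<Sum>z\<in>basis N. if z = h y then A x z else 0)"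
    unfolding op_mult_def
    by (rule sum.cong) (use assms(2) y in \<open>auto simp: realizes_def map_op_def\<close>)
  also have "\<dots> = A x (h y)" using hy finite_basis by simp
  also have "\<dots> = map_op (g \<circ> h) x y" using assms(1) x hy by (simp add: realizes_def map_op_def)
  finally show "op_mult N A B x y = map_op (g \<circ> h) x y" .
qed

lemma layer_op_Cons: "layer_op N ((c, t) # L) = op_mult N (cnot c t) (layer_op N L)"
  by (simp add: layer_op_def)

lemma circuit_op_Cons: "circuit_op N (L # Ls) = op_mult N (layer_op N L) (circuit_op N Ls)"
  by (simp add: circuit_op_def)

lemma layer_map_Cons: "layer_map ((c, t) # L) = cnot_map c t \<circ> layer_map L"
  by (simp add: layer_map_def)

lemma circuit_map_Cons: "circuit_map (L # Ls) = layer_map L \<circ> circuit_map Ls"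
  by (simp add: circuit_map_def)

lemma realizes_layer_op:
  "\<forall>(c, t)\<in>set L. t < N \<Longrightarrow> realizes N (layer_op N L) (layer_map L)"
proof (induction L)
  case Nil
  show ?case by (simp add: layer_op_def layer_map_def realizes_op_id)
next
  case (Cons a L)
  obtain c t where a: "a = (c, t)" by fastforce
  have gate: "realizes N (cnot c t) (cnot_map c t)"
    unfolding cnot_eq_map_op using Cons.prems a
    by (intro realizes_map_op) (auto simp: basis_def cnot_map_def)
  have rest: "realizes N (layer_op N L) (layer_map L)" using Cons by simp
  show ?case unfolding a layer_op_Cons layer_map_Cons by (rule realizes_op_mult[OF gate rest])
qed

lemma realizes_circuit_op:
  "\<forall>L\<in>set Ls. cnot_layer N L \<Longrightarrow> realizes N (circuit_op N Ls) (circuit_map Ls)"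
proof (induction Ls)
  case Nil
  show ?case by (simp add: circuit_op_def circuit_map_def realizes_op_id)
next
  case (Cons L Ls)
  then have layer: "realizes N (layer_op N L) (layer_map L)"
    by (intro realizes_layer_op) (auto simp: cnot_layer_def)
  have rest: "realizes N (circuit_op N Ls) (circuit_map Ls)" using Cons by simp
  show ?case unfolding circuit_op_Cons circuit_map_Cons by (rule realizes_op_mult[OF layer rest])
qed

lemma realizes_perm_op:
  assumes "\<sigma> permutes {..<n}"
  shows "realizes n (perm_op n \<sigma>) (\<lambda>y i. y (inv \<sigma> i))"
  unfolding perm_op_eq_map_op
  using permutes_not_in[OF permutes_inv[OF assms]]
  by (intro realizes_map_op) (auto simp: basis_def)

lemma realizes_same_map_eq:
  "realizes N A g \<Longrightarrow> realizes N B g \<Longrightarrow> x \<in> basis N \<Longrightarrow> y \<in> basis N \<Longrightarrow> A x y = B x y"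
  by (simp add: realizes_def)

lemma with_zero_ancillae_eq: "with_zero_ancillae n \<psi> y = (if y \<in> basis n then \<psi> y else 0)"
  by (simp add: with_zero_ancillae_def basis_def)

lemma embeds_if_realizes:
  assumes M: "realizes (n + m) M g" and F: "realizes n F h"
    and agree: "\<And>y. y \<in> basis n \<Longrightarrow> g y = h y"
  shows "embeds n m M F"
  unfolding embeds_def
proof (intro allI ballI)
  fix \<psi> and x :: bits assume x: "x \<in> basis (n + m)"
  have sub: "basis n \<subseteq> basis (n + m)" by (auto simp: basis_def)
  have "op_apply (n + m) M (with_zero_ancillae n \<psi>) x
      = (\<Sum>y\<in>basis (n + m). if y \<in> basis n then M x y * \<psi> y else 0)"
    by (auto simp: op_apply_def with_zero_ancillae_eq intro!: sum.cong)
  also have "\<dots> = (\<Sum>y\<in>basis n. M x y * \<psi> y)"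
    by (simp add: sum.inter_restrict[OF finite_basis, symmetric] Int_absorb1[OF sub])
  also have "\<dots> = (\<Sum>y\<in>basis n. map_op h x y * \<psi> y)"
  proof (rule sum.cong)
    fix y assume y: "y \<in> basis n"
    with M x sub have "M x y = map_op g x y" by (auto simp: realizes_def)
    with agree[OF y] show "M x y * \<psi> y = map_op h x y * \<psi> y" by (simp add: map_op_def)
  qed simp
  also have "\<dots> = with_zero_ancillae n (op_apply n F \<psi>) x"
  proof (cases "x \<in> basis n")
    case True
    with F show ?thesis
      by (simp add: with_zero_ancillae_eq op_apply_def realizes_def)
  next
    case False
    with F have "map_op h x y = 0" if "y \<in> basis n" for y
      using that by (auto simp: realizes_def map_op_def)
    with False show ?thesis by (simp add: with_zero_ancillae_eq)
  qed
  finally show "op_apply (n + m) M (with_zero_ancillae n \<psi>) x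
      = with_zero_ancillae n (op_apply n F \<psi>) x" .
qed

lemma circuit_map_append: "circuit_map (Ls @ Ms) = circuit_map Ls \<circ> circuit_map Ms"
proof (induction Ls)
  case Nil
  show ?case by (simp add: circuit_map_def)
next
  case (Cons L Ls)
  then show ?case by (simp add: circuit_map_Cons comp_assoc)
qed

lemma layer_map_other: "t \<notin> snd ` set L \<Longrightarrow> layer_map L y t = y t"
  by (induction L) (auto simp: layer_map_def cnot_map_def)

lemma layer_map_target:
  assumes "cnot_layer N L" and "(c, t) \<in> set L"
  shows "layer_map L y t = (y t \<noteq> y c)"
  using assms
proof (induction L)
  case Nil
  then show ?case by simp
next
  case (Cons a L)
  obtain c' t' where a: "a = (c', t')" by fastforce
  have L: "cnot_layer N L" using Cons.prems(1) by (simp add: cnot_layer_def)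
  show ?case
  proof (cases "a = (c, t)")
    case True
    with Cons.prems(1) have "t \<notin> snd ` set L" "c \<notin> snd ` set L"
      by (force simp: cnot_layer_def)+
    then show ?thesis by (simp add: True layer_map_Cons cnot_map_def layer_map_other)
  next
    case False
    with Cons.prems a have "(c, t) \<in> set L" "t \<noteq> t'"
      by (auto simp: cnot_layer_def)
    then show ?thesis using Cons.IH[OF L] a by (simp add: layer_map_Cons cnot_map_def)
  qed
qed

lemma cnot_layer_parallel:
  assumes "distinct xs" "inj_on f (set xs)" "inj_on g (set xs)"
    "f ` set xs \<inter> g ` set xs = {}" "\<forall>i\<in>set xs. f i < N \<and> g i < N"
  shows "cnot_layer N (map (\<lambda>i. (f i, g i)) xs)"
  using assms
proof (induction xs)
  case Nil
  then show ?case by (simp add: cnot_layer_def)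
next
  case (Cons a xs)
  then show ?case by (auto simp: cnot_layer_def inj_on_def)
qed

lemma layer_map_parallel_target:
  "cnot_layer N (map (\<lambda>i. (f i, g i)) xs) \<Longrightarrow> i \<in> set xs
   \<Longrightarrow> layer_map (map (\<lambda>i. (f i, g i)) xs) y (g i) = (y (g i) \<noteq> y (f i))"
  by (erule layer_map_target) simp

lemma layer_map_parallel_other:
  "k \<notin> g ` set xs \<Longrightarrow> layer_map (map (\<lambda>i. (f i, g i)) xs) y k = y k"
  by (rule layer_map_other) (simp add: image_image)

text \<open>XOR swap: the layers CNOT(i, \<tau> i), CNOT(\<tau> i, i), CNOT(i, \<tau> i), taken over the
  smaller point i of every 2-cycle of \<tau>, exchange the qubits of all these 2-cycles at once.\<close>

definition swap_circuit :: "nat \<Rightarrow> (nat \<Rightarrow> nat) \<Rightarrow> (nat \<times> nat) list list" where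
  "swap_circuit n \<tau> =
     (let xs = filter (\<lambda>i. i < \<tau> i) [0..<n]
      in [map (\<lambda>i. (i, \<tau> i)) xs, map (\<lambda>i. (\<tau> i, i)) xs, map (\<lambda>i. (i, \<tau> i)) xs])"

lemma involution_layers:
  assumes "\<tau> permutes {..<n}" and "\<tau> \<circ> \<tau> = id"
  defines "xs \<equiv> filter (\<lambda>i. i < \<tau> i) [0..<n]"
  shows "cnot_layer n (map (\<lambda>i. (i, \<tau> i)) xs)"
    and "cnot_layer n (map (\<lambda>i. (\<tau> i, i)) xs)"
    and layer_map_involution_down:
      "layer_map (map (\<lambda>i. (i, \<tau> i)) xs) z k = (if \<tau> k < k then z k \<noteq> z (\<tau> k) else z k)"
    and layer_map_involution_up:
      "layer_map (map (\<lambda>i. (\<tau> i, i)) xs) z k = (if k < \<tau> k then z k \<noteq> z (\<tau> k) else z k)"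
proof -
  have \<tau>\<tau>: "\<tau> (\<tau> i) = i" for i using assms(2) by (metis comp_apply id_apply)
  have inj: "inj_on \<tau> A" for A by (metis \<tau>\<tau> inj_onI)
  have bound: "\<tau> i < n" if "i < n" for i using permutes_in_image[OF assms(1)] that by simp
  have fixed: "\<tau> i = i" if "\<not> i < n" for i using permutes_not_in[OF assms(1)] that by simp
  have disj: "set xs \<inter> \<tau> ` set xs = {}" using \<tau>\<tau> by (force simp: xs_def)
  show down: "cnot_layer n (map (\<lambda>i. (i, \<tau> i)) xs)"
    by (rule cnot_layer_parallel) (use inj disj bound in \<open>auto simp: xs_def\<close>)
  show up: "cnot_layer n (map (\<lambda>i. (\<tau> i, i)) xs)"
    by (rule cnot_layer_parallel) (use inj disj bound in \<open>auto simp: xs_def\<close>)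
  show "layer_map (map (\<lambda>i. (i, \<tau> i)) xs) z k = (if \<tau> k < k then z k \<noteq> z (\<tau> k) else z k)"
  proof (cases "\<tau> k < k")
    case True
    then have "\<tau> k \<in> set xs" using \<tau>\<tau> fixed[of k] bound[of k] by (cases "k < n") (auto simp: xs_def)
    from layer_map_parallel_target[OF down this] True show ?thesis by (simp add: \<tau>\<tau>)
  next
    case False
    then have "k \<notin> \<tau> ` set xs" using \<tau>\<tau> by (force simp: xs_def)
    with False show ?thesis by (simp add: layer_map_parallel_other)
  qed
  show "layer_map (map (\<lambda>i. (\<tau> i, i)) xs) z k = (if k < \<tau> k then z k \<noteq> z (\<tau> k) else z k)"
  proof (cases "k < \<tau> k")
    case True
    then have "k \<in> set xs" using fixed[of k] by (cases "k < n") (auto simp: xs_def)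
    from layer_map_parallel_target[OF up this] True show ?thesis by simp
  next
    case False
    then have "k \<notin> (\<lambda>i. i) ` set xs" by (simp add: xs_def)
    with False show ?thesis using layer_map_parallel_other[of k "\<lambda>i. i" xs \<tau>] by simp
  qed
qed

lemma swap_circuit:
  assumes "\<tau> permutes {..<n}" and "\<tau> \<circ> \<tau> = id"
  shows cnot_layers_swap_circuit: "\<forall>L\<in>set (swap_circuit n \<tau>). cnot_layer n L"
    and circuit_map_swap_circuit: "circuit_map (swap_circuit n \<tau>) y = y \<circ> \<tau>"
proof -
  have \<tau>\<tau>: "\<tau> (\<tau> i) = i" for i using assms(2) by (metis comp_apply id_apply)
  show "\<forall>L\<in>set (swap_circuit n \<tau>). cnot_layer n L"
    using involution_layers[OF assms] by (simp add: swap_circuit_def Let_def)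
  show "circuit_map (swap_circuit n \<tau>) y = y \<circ> \<tau>"
  proof
    fix k
    consider "\<tau> k < k" | "k < \<tau> k" | "\<tau> k = k" by linarith
    then show "circuit_map (swap_circuit n \<tau>) y k = (y \<circ> \<tau>) k"
      by cases (auto simp: swap_circuit_def Let_def circuit_map_def \<tau>\<tau>
          layer_map_involution_down[OF assms] layer_map_involution_up[OF assms])
  qed
qed

lemma funpow_inv_eq_if_funpow_eq:
  assumes "bij f" and "(f ^^ a) x = (f ^^ b) x"
  shows "(inv f ^^ a) x = (inv f ^^ b) x"
proof -
  have cancel: "(f ^^ k) ((inv f ^^ k) z) = z" for k z
    using fn_o_inv_fn_is_id[OF assms(1), of k] by (simp add: fun_eq_iff)
  have "(f ^^ (b + a)) ((inv f ^^ a) x) = (f ^^ b) x" by (simp add: funpow_add cancel)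
  also have "\<dots> = (f ^^ (a + b)) ((inv f ^^ b) x)"
    using assms(2) by (simp add: funpow_add cancel)
  finally show ?thesis
    using inj_fn[OF bij_is_inj[OF assms(1)], of "a + b"] by (simp add: add.commute inj_eq)
qed

lemma permutation_orbit_base_points:
  assumes "permutation \<sigma>"
  obtains r e where "\<And>x. r (\<sigma> x) = r x" and "\<And>x. r (r x) = r x"
    and "\<And>x. (\<sigma> ^^ e x) (r x) = x" and "\<And>x. \<sigma> x = x \<Longrightarrow> r x = x"
proof -
  have orbit_eq: "orbit \<sigma> y = orbit \<sigma> x" if "y \<in> orbit \<sigma> x" for x y
    using cyclic_on_orbit'[OF assms] that by (rule orbit_cyclic_eq3)
  define r where "r x = (SOME z. z \<in> orbit \<sigma> x)" for x
  have r_in: "r x \<in> orbit \<sigma> x" for x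
    unfolding r_def using permutation_self_in_orbit[OF assms] by (rule someI)
  have r_cong: "r y = r x" if "y \<in> orbit \<sigma> x" for x y
    unfolding r_def orbit_eq[OF that] ..
  have "\<exists>k. (\<sigma> ^^ k) (r x) = x" for x
  proof -
    have "x \<in> orbit \<sigma> (r x)"
      using orbit_eq[OF r_in, of x] permutation_self_in_orbit[OF assms, of x] by simp
    then show ?thesis unfolding orbit_altdef_permutation[OF assms] by (blast intro: sym)
  qed
  then obtain e where "(\<sigma> ^^ e x) (r x) = x" for x by metis
  moreover have "r x = x" if "\<sigma> x = x" for x
    using r_in[of x] that by (simp add: orbit_eq_singleton_iff[THEN iffD2])
  ultimately show thesis using that r_cong[OF orbit.base] r_cong[OF r_in] by blast
qed

lemma permutes_orbit_reflection:
  assumes "\<sigma> permutes S" and "finite S"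
  obtains \<tau> where "\<tau> \<circ> \<tau> = id" and "\<tau> \<circ> \<sigma> = inv \<sigma> \<circ> \<tau>" and "\<And>x. x \<notin> S \<Longrightarrow> \<tau> x = x"
proof -
  have bij: "bij \<sigma>" using permutes_bij[OF assms(1)] .
  obtain r e where r_step: "\<And>x. r (\<sigma> x) = r x" and r_r: "\<And>x. r (r x) = r x"
    and e: "\<And>x. (\<sigma> ^^ e x) (r x) = x" and r_fixed: "\<And>x. \<sigma> x = x \<Longrightarrow> r x = x"
    using permutation_orbit_base_points assms by (metis permutation_permutes)
  \<comment> \<open>\<tau> reflects every orbit at its base point r; by \<open>funpow_inv_eq_if_funpow_eq\<close> the choice
    of the exponent e does not matter.\<close>
  define \<tau> where "\<tau> x = (inv \<sigma> ^^ e x) (r x)" for x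
  have \<tau>_base: "\<tau> (r x) = r x" for x
  proof -
    have "(\<sigma> ^^ e (r x)) (r x) = (\<sigma> ^^ 0) (r x)" using e[of "r x"] r_r by simp
    from funpow_inv_eq_if_funpow_eq[OF bij this] show ?thesis unfolding \<tau>_def r_r by simp
  qed
  have \<tau>_step: "\<tau> (\<sigma> x) = inv \<sigma> (\<tau> x)" for x
  proof -
    have "(\<sigma> ^^ e (\<sigma> x)) (r x) = (\<sigma> ^^ Suc (e x)) (r x)"
      using e[of "\<sigma> x"] e[of x] r_step by simp
    from funpow_inv_eq_if_funpow_eq[OF bij this] show ?thesis unfolding \<tau>_def r_step by simp
  qed
  have \<tau>_step_inv: "\<tau> (inv \<sigma> x) = \<sigma> (\<tau> x)" for x
    using \<tau>_step[of "inv \<sigma> x"] bij by (simp add: bij_is_surj surj_f_inv_f bij_inv_eq_iff)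
  have \<tau>_inv_funpow: "\<tau> ((inv \<sigma> ^^ k) x) = (\<sigma> ^^ k) (\<tau> x)" for k x
    by (induction k) (simp_all add: \<tau>_step_inv)
  have "\<tau> (\<tau> x) = x" for x
    using \<tau>_inv_funpow[of "e x" "r x"] \<tau>_base e by (simp add: \<tau>_def[of x])
  moreover have "\<tau> x = x" if "x \<notin> S" for x
    using \<tau>_base[of x] r_fixed[OF permutes_not_in[OF assms(1) that]] by simp
  ultimately show thesis using that[of \<tau>] \<tau>_step by (simp add: fun_eq_iff)
qed

lemma permutes_product_of_involutions:
  assumes "\<sigma> permutes S" and "finite S"
  obtains \<rho> \<tau> where "\<rho> permutes S" "\<tau> permutes S" "\<rho> \<circ> \<rho> = id" "\<tau> \<circ> \<tau> = id" "\<sigma> = \<rho> \<circ> \<tau>"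
proof -
  obtain \<tau> where \<tau>\<tau>: "\<tau> \<circ> \<tau> = id" and reflect: "\<tau> \<circ> \<sigma> = inv \<sigma> \<circ> \<tau>"
    and fixed: "\<And>x. x \<notin> S \<Longrightarrow> \<tau> x = x"
    using permutes_orbit_reflection[OF assms] by blast
  have \<tau>: "\<tau> permutes S"
    unfolding permutes_def using \<tau>\<tau> fixed by (metis comp_apply id_apply)
  have "(\<sigma> \<circ> \<tau>) \<circ> (\<sigma> \<circ> \<tau>) = (\<sigma> \<circ> inv \<sigma>) \<circ> (\<tau> \<circ> \<tau>)"
    by (metis reflect comp_assoc)
  also have "\<dots> = id" using \<tau>\<tau> permutes_inv_o(1)[OF assms(1)] by simp
  finally have "(\<sigma> \<circ> \<tau>) \<circ> (\<sigma> \<circ> \<tau>) = id" .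
  moreover have "\<sigma> = (\<sigma> \<circ> \<tau>) \<circ> \<tau>" by (simp add: comp_assoc \<tau>\<tau>)
  ultimately show thesis
    using that permutes_compose[OF \<tau> assms(1)] \<tau> \<tau>\<tau> by blast
qed

text \<open>Qubit \<open>n + j\<close> is the ancilla of qubit j; the last layer of the list acts first, so the
  layers below are copy, erase, restore and clear in reverse order.\<close>

definition ancilla_circuit :: "nat \<Rightarrow> (nat \<Rightarrow> nat) \<Rightarrow> (nat \<times> nat) list list" where
  "ancilla_circuit n \<sigma> =
     [map (\<lambda>i. (i, n + i)) [0..<n], map (\<lambda>i. (n + i, i)) [0..<n],
      map (\<lambda>i. (n + \<sigma> i, i)) [0..<n], map (\<lambda>i. (i, n + \<sigma> i)) [0..<n]]"

lemma cnot_layers_ancilla_pairs: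
  assumes "\<sigma> permutes {..<n}"
  shows "cnot_layer (n + n) (map (\<lambda>i. (i, n + \<sigma> i)) [0..<n])"
    and "cnot_layer (n + n) (map (\<lambda>i. (n + \<sigma> i, i)) [0..<n])"
proof -
  have bound: "\<sigma> i < n" if "i < n" for i using permutes_in_image[OF assms] that by simp
  have inj: "inj_on (\<lambda>i. n + \<sigma> i) A" for A
    by (rule inj_on_subset[OF injI subset_UNIV]) (use permutes_inj[OF assms] in \<open>simp add: inj_eq\<close>)
  show "cnot_layer (n + n) (map (\<lambda>i. (i, n + \<sigma> i)) [0..<n])"
    by (rule cnot_layer_parallel) (use inj bound in auto)
  show "cnot_layer (n + n) (map (\<lambda>i. (n + \<sigma> i, i)) [0..<n])"
    by (rule cnot_layer_parallel) (use inj bound in auto)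
qed

lemma layer_map_copy_erase:
  assumes \<sigma>: "\<sigma> permutes {..<n}" and y: "y \<in> basis n"
  shows "layer_map (map (\<lambda>i. (n + \<sigma> i, i)) [0..<n]) (layer_map (map (\<lambda>i. (i, n + \<sigma> i)) [0..<n]) y)
    = (\<lambda>k. n \<le> k \<and> k < n + n \<and> y (inv \<sigma> (k - n)))"
proof
  fix k
  let ?copy = "map (\<lambda>i. (i, n + \<sigma> i)) [0..<n]" and ?erase = "map (\<lambda>i. (n + \<sigma> i, i)) [0..<n]"
  have bound: "\<sigma> i < n" if "i < n" for i using permutes_in_image[OF \<sigma>] that by simp
  have y0: "\<not> y k" if "n \<le> k" for k using y that by (simp add: basis_def)
  have copy_low: "layer_map ?copy y k = y k" if "k < n \<or> n + n \<le> k" for k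
  proof -
    have "k \<noteq> n + \<sigma> i" if "i < n" for i using bound[OF that] \<open>k < n \<or> n + n \<le> k\<close> by linarith
    then show ?thesis by (intro layer_map_parallel_other) (simp add: image_iff)
  qed
  have copy_high: "layer_map ?copy y (n + \<sigma> i) = y i" if "i < n" for i
    using layer_map_parallel_target[OF cnot_layers_ancilla_pairs(1)[OF \<sigma>], of i y]
      y0[of "n + \<sigma> i"] that by simp
  consider "k < n" | "n \<le> k" "k < n + n" | "n + n \<le> k" by linarith
  then show "layer_map ?erase (layer_map ?copy y) k = (n \<le> k \<and> k < n + n \<and> y (inv \<sigma> (k - n)))"
  proof cases
    case 1
    then show ?thesis
      using layer_map_parallel_target[OF cnot_layers_ancilla_pairs(2)[OF \<sigma>], of k]
        copy_low[of k] copy_high[of k] by simp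
  next
    case 2
    then have "k = n + \<sigma> (inv \<sigma> (k - n))" "inv \<sigma> (k - n) < n"
      using permutes_inverses(1)[OF \<sigma>] permutes_in_image[OF permutes_inv[OF \<sigma>]] by auto
    with 2 show ?thesis
      using copy_high[of "inv \<sigma> (k - n)"] by (simp add: layer_map_parallel_other)
  next
    case 3
    then show ?thesis using copy_low[of k] y0[of k] by (simp add: layer_map_parallel_other)
  qed
qed

lemma layer_map_restore_clear:
  assumes z0: "\<And>k. k < n \<or> n + n \<le> k \<Longrightarrow> \<not> z k"
  shows "layer_map (map (\<lambda>i. (i, n + i)) [0..<n]) (layer_map (map (\<lambda>i. (n + i, i)) [0..<n]) z)
    = (\<lambda>k. k < n \<and> z (n + k))"
proof
  fix k
  let ?restore = "map (\<lambda>i. (n + i, i)) [0..<n]" and ?clear = "map (\<lambda>i. (i, n + i)) [0..<n]"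
  note layers = cnot_layers_ancilla_pairs[OF permutes_id, unfolded id_apply]
  have restore_low: "layer_map ?restore z i = z (n + i)" if "i < n" for i
    using layer_map_parallel_target[OF layers(2), where i = i and y = z] z0[of i] that by simp
  have restore_high: "layer_map ?restore z k = z k" if "n \<le> k" for k
    using that by (intro layer_map_parallel_other) auto
  consider "k < n" | j where "j < n" "k = n + j" | "n + n \<le> k"
    by (metis le_Suc_ex nat_add_left_cancel_less not_le)
  then show "layer_map ?clear (layer_map ?restore z) k = (k < n \<and> z (n + k))"
  proof cases
    case 1
    then show ?thesis using restore_low[of k] by (simp add: layer_map_parallel_other)
  next
    case 2
    then show ?thesis
      using layer_map_parallel_target[OF layers(1), where i = j] restore_low[of j] restore_high[of k]
      by simp
  next
    case 3
    then show ?thesis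
      using restore_high[of k] z0[of k] by (simp add: layer_map_parallel_other)
  qed
qed

lemma cnot_layers_ancilla_circuit:
  "\<sigma> permutes {..<n} \<Longrightarrow> \<forall>L\<in>set (ancilla_circuit n \<sigma>). cnot_layer (n + n) L"
  using cnot_layers_ancilla_pairs cnot_layers_ancilla_pairs[OF permutes_id, unfolded id_apply]
  by (simp add: ancilla_circuit_def)

lemma circuit_map_ancilla_circuit:
  assumes "\<sigma> permutes {..<n}" and y: "y \<in> basis n"
  shows "circuit_map (ancilla_circuit n \<sigma>) y = (\<lambda>i. y (inv \<sigma> i))"
proof -
  define z where "z = (\<lambda>k. n \<le> k \<and> k < n + n \<and> y (inv \<sigma> (k - n)))"
  have "circuit_map (ancilla_circuit n \<sigma>) y
      = layer_map (map (\<lambda>i. (i, n + i)) [0..<n]) (layer_map (map (\<lambda>i. (n + i, i)) [0..<n]) z)"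
    by (simp add: ancilla_circuit_def circuit_map_def layer_map_copy_erase[OF assms] z_def)
  also have "\<dots> = (\<lambda>k. k < n \<and> y (inv \<sigma> k))"
    by (subst layer_map_restore_clear) (auto simp: z_def)
  also have "\<dots> = (\<lambda>k. y (inv \<sigma> k))"
  proof
    fix k
    show "(k < n \<and> y (inv \<sigma> k)) = y (inv \<sigma> k)"
      using permutes_not_in[OF permutes_inv[OF assms(1)], of k] y
      by (cases "k < n") (auto simp: basis_def)
  qed
  finally show ?thesis .
qed

lemma six_layer_circuit:
  assumes "\<sigma> permutes {..<n}"
  obtains Ls where "length Ls = 6" and "\<forall>L\<in>set Ls. cnot_layer n L"
    and "circuit_map Ls = (\<lambda>y i. y (inv \<sigma> i))"
proof -
  obtain \<rho> \<tau> where \<rho>: "\<rho> permutes {..<n}" "\<rho> \<circ> \<rho> = id" and \<tau>: "\<tau> permutes {..<n}" "\<tau> \<circ> \<tau> = id"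
    and \<sigma>: "\<sigma> = \<rho> \<circ> \<tau>"
    using permutes_product_of_involutions[OF assms finite_lessThan] by metis
  have "\<rho> (\<rho> x) = x" "\<tau> (\<tau> x) = x" for x using \<rho>(2) \<tau>(2) by (simp_all add: pointfree_idE)
  then have "inv \<sigma> = \<tau> \<circ> \<rho>" by (intro inv_unique_comp) (simp_all add: \<sigma> fun_eq_iff)
  then have "circuit_map (swap_circuit n \<rho> @ swap_circuit n \<tau>) = (\<lambda>y i. y (inv \<sigma> i))"
    by (simp add: circuit_map_append circuit_map_swap_circuit[OF \<rho>]
        circuit_map_swap_circuit[OF \<tau>] fun_eq_iff)
  moreover have "length (swap_circuit n \<rho> @ swap_circuit n \<tau>) = 6"
    by (simp add: swap_circuit_def Let_def)
  moreover have "\<forall>L\<in>set (swap_circuit n \<rho> @ swap_circuit n \<tau>). cnot_layer n L"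
    using cnot_layers_swap_circuit[OF \<rho>] cnot_layers_swap_circuit[OF \<tau>] by auto
  ultimately show thesis using that by blast
qed

theorem proposition1:
  fixes n :: nat and \<sigma> :: "nat \<Rightarrow> nat"
  assumes "n \<ge> 1" and "\<sigma> permutes {..<n}"
  shows "(\<exists>Ls. length Ls = 4 \<and> (\<forall>L\<in>set Ls. cnot_layer (n + n) L)
            \<and> embeds n n (circuit_op (n + n) Ls) (perm_op n \<sigma>))
       \<and> (\<exists>Ls. length Ls = 6 \<and> (\<forall>L\<in>set Ls. cnot_layer n L)
            \<and> (\<forall>x\<in>basis n. \<forall>y\<in>basis n. circuit_op n Ls x y = perm_op n \<sigma> x y))"
proof -
  have "embeds n n (circuit_op (n + n) (ancilla_circuit n \<sigma>)) (perm_op n \<sigma>)"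
    using realizes_circuit_op[OF cnot_layers_ancilla_circuit[OF assms(2)]]
      realizes_perm_op[OF assms(2)] circuit_map_ancilla_circuit[OF assms(2)]
    by (rule embeds_if_realizes)
  moreover have "length (ancilla_circuit n \<sigma>) = 4" by (simp add: ancilla_circuit_def)
  moreover obtain Ls where "length Ls = 6" and layers: "\<forall>L\<in>set Ls. cnot_layer n L"
    and map: "circuit_map Ls = (\<lambda>y i. y (inv \<sigma> i))"
    using six_layer_circuit[OF assms(2)] .
  moreover have "\<forall>x\<in>basis n. \<forall>y\<in>basis n. circuit_op n Ls x y = perm_op n \<sigma> x y"
    using realizes_circuit_op[OF layers, unfolded map] realizes_perm_op[OF assms(2)]
    by (blast intro: realizes_same_map_eq)
  ultimately show ?thesis using cnot_layers_ancilla_circuit[OF assms(2)] by blast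
qed

end
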